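(* Let $X=\{X_t\}_{t\geq0}$ be a standard one-dimensional Brownian motion starting at $0$ on a probability space $(\Omega,\mathcal{F},\mathbb{P})$. Let $p$ be an atomic proposition interpreted by $B_p=[1,\infty)$, i.e. $X(\omega),t\models p$ iff $X_t(\omega)\geq1$ (and likewise for the discrete semantics). Define $\phi_1:=\Box_{(1,2)}(\Diamond_{(1,4)}p\wedge\lnot\Diamond_{(1,3)}p)$, $\phi_2:=(\Diamond_{(1,3)}\phi_1)\wedge(\lnot\Diamond_{(1,2)}\phi_1)\wedge(\lnot\Diamond_{(2,3)}\phi_1)$, $\phi_3:=\Diamond_{(1,2)}\phi_2$, $\psi:=(\lnot p)\wedge(\lnot\Diamond_{(0,8)}p)\wedge\phi_3$. Then $\mathbb{P}(\omega : X(\omega),0\models_n\psi)$ does not converge to $\mathbb{P}(\omega : X(\omega),0\models\psi)$ as $n\to\infty$.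
   Context: Continuous semantics for $t\geq0$: $X(\omega),t\models p$ iff $X_t(\omega)\in B_p$; negation and conjunction are interpreted classically; $X(\omega),t\models\Diamond_I\phi$ iff there exists $s\in I$ with $X(\omega),t+s\models\phi$; $\Box_I\phi:=\lnot\Diamond_I\lnot\phi$, so $X(\omega),t\models\Box_I\phi$ iff $X(\omega),t+s\models\phi$ for all $s\in I$. Discrete semantics: for $n\in\mathbb{N}$ let $\mathbb{N}/n=\{k/n:k\in\mathbb{N}\}$; for $t\in\mathbb{N}/n$, $X(\omega),t\models_n p$ iff $X_t(\omega)\in B_p$; negation and conjunction classical; $X(\omega),t\models_n\Diamond_I\phi$ iff there exists $s\in I\cap\mathbb{N}/n$ with $X(\omega),t+s\models_n\phi$; $X(\omega),t\models_n\Box_I\phi$ iff $X(\omega),t+s\models_n\phi$ for all $s\in I\cap\mathbb{N}/n$. *)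

theory Defs
  imports "HOL-Probability.Probability"
begin

text \<open>Standard one-dimensional Brownian motion started at 0 on the probability space M:
  X 0 = 0, continuous sample paths on [0,inf), Gaussian increments
  X t - X s ~ N(0, t - s) for 0 <= s < t, and independent increments.
  Values of X at negative times are irrelevant.\<close>
definition brownian_motion :: "'a measure \<Rightarrow> (real \<Rightarrow> 'a \<Rightarrow> real) \<Rightarrow> bool" where
  "brownian_motion M X \<longleftrightarrow>
     prob_space M \<and>
     (\<forall>t\<ge>0. X t \<in> borel_measurable M) \<and>
     (\<forall>\<omega>\<in>space M. X 0 \<omega> = 0) \<and>
     (\<forall>\<omega>\<in>space M. continuous_on {0..} (\<lambda>t. X t \<omega>)) \<and>
     (\<forall>s t. 0 \<le> s \<and> s < t \<longrightarrow>
        distributed M lborel (\<lambda>\<omega>. X t \<omega> - X s \<omega>)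
          (\<lambda>x. ennreal (normal_density 0 (sqrt (t - s)) x))) \<and>
     (\<forall>(n::nat) (ts::nat \<Rightarrow> real). 0 \<le> ts 0 \<and> (\<forall>i<n. ts i < ts (Suc i)) \<longrightarrow>
        prob_space.indep_vars M (\<lambda>_. borel) (\<lambda>i \<omega>. X (ts (Suc i)) \<omega> - X (ts i) \<omega>) {..<n})"

text \<open>Formulas of the (metric) temporal logic: atomic propositions are given directly by
  their interpreting sets B_p; Diamond I phi is the eventually operator with time interval I.\<close>
datatype mtl = Atom "real set" | Neg mtl | Conj mtl mtl | Dia "real set" mtl

definition Box :: "real set \<Rightarrow> mtl \<Rightarrow> mtl" where
  "Box I \<phi> = Neg (Dia I (Neg \<phi>))"

fun csat :: "(real \<Rightarrow> real) \<Rightarrow> real \<Rightarrow> mtl \<Rightarrow> bool" where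
  "csat f t (Atom B) = (f t \<in> B)"
| "csat f t (Neg \<phi>) = (\<not> csat f t \<phi>)"
| "csat f t (Conj \<phi> \<psi>) = (csat f t \<phi> \<and> csat f t \<psi>)"
| "csat f t (Dia I \<phi>) = (\<exists>s\<in>I. csat f (t + s) \<phi>)"

definition grid :: "nat \<Rightarrow> real set" where
  "grid n = {real k / real n | k. True}"

text \<open>Discrete semantics with resolution n (meant for t in N/n).\<close>
fun dsat :: "nat \<Rightarrow> (real \<Rightarrow> real) \<Rightarrow> real \<Rightarrow> mtl \<Rightarrow> bool" where
  "dsat n f t (Atom B) = (f t \<in> B)"
| "dsat n f t (Neg \<phi>) = (\<not> dsat n f t \<phi>)"
| "dsat n f t (Conj \<phi> \<psi>) = (dsat n f t \<phi> \<and> dsat n f t \<psi>)"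
| "dsat n f t (Dia I \<phi>) = (\<exists>s\<in>I \<inter> grid n. dsat n f (t + s) \<phi>)"

end

theory Submission
  imports Defs
begin

text \<open>
  For a continuous path and a closed set B, \<open>\<phi>\<^sub>1\<close> holds at w exactly when the path avoids B
  on (w+2, w+5) and lies in B at w+5. Hence \<open>\<psi>\<close> holds iff the path avoids B on [0,8] and
  enters B during (8,9): at the first entrance T, \<open>\<phi>\<^sub>1\<close> holds at T-5 but nowhere else in
  (T-6, T-4), which is \<open>\<phi>\<^sub>2\<close> at T-7. For Brownian motion and B = [1,\<infinity>) this has positive
  probability: by the reflection principle on dyadic grids the path stays below 1/2 on [0,8]
  while ending above some -b with positive probability, and an independent increment larger
  than 1+b on [8, 17/2] then carries it to 1.

  On the grid of mesh h = 1/n \<le> 1/2, \<open>\<phi>\<^sub>1\<close> at w only confines the first entrance after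
  w+2 to {w+5-h, w+5}. So if \<open>\<phi>\<^sub>1\<close> holds at s+2 it also holds at s+2-h or at s+2+h, which
  \<open>\<phi>\<^sub>2\<close> forbids: the discrete probabilities are 0 for n \<ge> 2.
\<close>

abbreviation phi1 :: "mtl \<Rightarrow> mtl" where
  "phi1 p \<equiv> Box {1<..<2} (Conj (Dia {1<..<4} p) (Neg (Dia {1<..<3} p)))"

abbreviation phi2 :: "mtl \<Rightarrow> mtl" where
  "phi2 p \<equiv> Conj (Dia {1<..<3} (phi1 p)) (Conj (Neg (Dia {1<..<2} (phi1 p))) (Neg (Dia {2<..<3} (phi1 p))))"

abbreviation psi :: "mtl \<Rightarrow> mtl" where
  "psi p \<equiv> Conj (Neg p) (Conj (Neg (Dia {0<..<8} p)) (Dia {1<..<2} (phi2 p)))"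

section \<open>Discrete semantics\<close>

lemma grid_iff: "0 < n \<Longrightarrow> x \<in> grid n \<longleftrightarrow> 0 \<le> x \<and> real n * x \<in> \<int>"
proof
  assume "0 < n" "0 \<le> x \<and> real n * x \<in> \<int>"
  then obtain z where z: "real n * x = of_int z" "0 \<le> z"
    by (metis Ints_cases of_int_0_le_iff of_nat_0_le_iff zero_le_mult_iff)
  then have "x = real (nat z) / real n" using \<open>0 < n\<close> by (simp add: field_simps)
  then show "x \<in> grid n" by (auto simp: grid_def)
qed (auto simp: grid_def)

lemma grid_less_imp_step_le:
  assumes "0 < n" "x \<in> grid n" "y \<in> grid n" "x < y"
  shows "x + 1 / real n \<le> y"
proof -
  obtain a b :: nat where "x = a / n" "y = b / n" using assms(2,3) by (auto simp: grid_def)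
  with assms(1,4) show ?thesis by (simp add: field_simps)
qed

lemma dsat_Dia_exactly_at:
  assumes "a < b" "b < c" "b \<in> grid n"
  shows "dsat n f t (Conj (Dia {a<..<c} \<phi>) (Conj (Neg (Dia {a<..<b} \<phi>)) (Neg (Dia {b<..<c} \<phi>))))
    \<longleftrightarrow> dsat n f (t + b) \<phi> \<and> (\<forall>u\<in>{a<..<c} \<inter> grid n - {b}. \<not> dsat n f (t + u) \<phi>)"
proof -
  let ?D = "\<lambda>u. dsat n f (t + u) \<phi>"
  have b: "b \<in> {a<..<c} \<inter> grid n" using assms by simp
  have split: "{a<..<c} \<inter> grid n - {b} = {a<..<b} \<inter> grid n \<union> {b<..<c} \<inter> grid n"
    using assms by auto
  have "(\<exists>s\<in>{a<..<c} \<inter> grid n. ?D s) \<longleftrightarrow> ?D b"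
    if "\<forall>u\<in>{a<..<c} \<inter> grid n - {b}. \<not> ?D u"
    using that b by blast
  then show ?thesis unfolding split by auto
qed

lemma dsat_phi1_unfold:
  "dsat n f w (phi1 (Atom B)) \<longleftrightarrow> (\<forall>v\<in>{1<..<2} \<inter> grid n.
      (\<exists>r\<in>{1<..<4} \<inter> grid n. f (w + v + r) \<in> B) \<and> (\<forall>r\<in>{1<..<3} \<inter> grid n. f (w + v + r) \<notin> B))"
  by (simp add: Box_def add.assoc)

lemma dsat_phi1_D:
  assumes n2: "2 \<le> n" and phi1: "dsat n f w (phi1 (Atom B))"
  defines "h \<equiv> 1 / real n"
  shows "\<forall>r\<in>{2 + h<..<5 - h} \<inter> grid n. f (w + r) \<notin> B"
    and "f (w + (5 - h)) \<in> B \<or> f (w + 5) \<in> B"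
proof -
  have n: "0 < n" using n2 by simp
  have h: "0 < h" "h \<le> 1/2" "real n * h = 1" using n2 by (auto simp: h_def field_simps)
  note grid_arith = grid_iff[OF n] ring_distribs mult.left_commute[of "real n"]
  note step = grid_less_imp_step_le[OF n, folded h_def]
  have L: "(\<exists>r\<in>{1<..<4} \<inter> grid n. f (w + v + r) \<in> B) \<and> (\<forall>r\<in>{1<..<3} \<inter> grid n. f (w + v + r) \<notin> B)"
    if "v \<in> {1<..<2} \<inter> grid n" for v
    using phi1 that unfolding dsat_phi1_unfold by blast
  have first: "1 + h \<in> {1<..<2} \<inter> grid n" and last: "2 - h \<in> {1<..<2} \<inter> grid n"
    using h by (auto simp: grid_arith)
  show no_hit: "\<forall>r\<in>{2 + h<..<5 - h} \<inter> grid n. f (w + r) \<notin> B"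
  proof
    fix r assume r: "r \<in> {2 + h<..<5 - h} \<inter> grid n"
    obtain v where "v \<in> {1<..<2} \<inter> grid n" "r - v \<in> {1<..<3} \<inter> grid n"
    proof (cases "r < 4 + h")
      case True
      then have "r - (1 + h) \<in> {1<..<3} \<inter> grid n" using r h by (auto simp: grid_arith)
      then show ?thesis using that first by blast
    next
      case False
      then have "r - (2 - h) \<in> {1<..<3} \<inter> grid n" using r h by (auto simp: grid_arith)
      then show ?thesis using that last by blast
    qed
    then have "f (w + v + (r - v)) \<notin> B" using L by blast
    then show "f (w + r) \<notin> B" by simp
  qed
  obtain r where r: "r \<in> {1<..<4} \<inter> grid n" "f (w + (1 + h) + r) \<in> B"
    using L[OF first] by blast
  have "3 \<le> r" using L[OF first] r by fastforce
  moreover have "r \<le> 4 - h" using step[of r 4] r by (auto simp: grid_arith)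
  moreover have "1 + h + r \<notin> {2 + h<..<5 - h} \<inter> grid n"
    using no_hit r(2) by (auto simp: add.assoc)
  then have "4 - 2 * h \<le> r" using r(1) h \<open>3 \<le> r\<close> by (auto simp: grid_arith)
  moreover have "4 - 2 * h \<in> grid n" using h by (auto simp: grid_arith)
  ultimately have "r = 4 - h \<or> r = 4 - 2 * h"
    using step[of "4 - 2 * h" r] r(1) by (cases "4 - 2 * h < r") auto
  then have "w + (1 + h) + r = w + 5 \<or> w + (1 + h) + r = w + (5 - h)" by auto
  then show "f (w + (5 - h)) \<in> B \<or> f (w + 5) \<in> B" using r(2) by metis
qed

lemma dsat_phi1_I:
  assumes n2: "2 \<le> n"
  defines "h \<equiv> 1 / real n"
  assumes no_hit: "\<And>r. r \<in> {2 + h<..<5 - h} \<inter> grid n \<Longrightarrow> f (w + r) \<notin> B"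
    and hit: "f (w + (5 - h)) \<in> B \<or> f (w + 5) \<in> B"
  shows "dsat n f w (phi1 (Atom B))"
  unfolding dsat_phi1_unfold
proof (intro ballI)
  have n: "0 < n" using n2 by simp
  have h: "0 < h" "h \<le> 1/2" "real n * h = 1" using n2 by (auto simp: h_def field_simps)
  note grid_arith = grid_iff[OF n] ring_distribs mult.left_commute[of "real n"]
  note step = grid_less_imp_step_le[OF n, folded h_def]
  fix v assume v: "v \<in> {1<..<2} \<inter> grid n"
  have v_bounds: "1 + h \<le> v" "v \<le> 2 - h"
    using step[of 1 v] step[of v 2] v by (auto simp: grid_arith)
  obtain t where t: "t = 5 - h \<or> t = 5" "f (w + t) \<in> B" using hit by blast
  have "t - v \<in> {1<..<4} \<inter> grid n" using t(1) v v_bounds h by (auto simp: grid_arith)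
  moreover have "w + v + (t - v) = w + t" by simp
  ultimately have "\<exists>r\<in>{1<..<4} \<inter> grid n. f (w + v + r) \<in> B" using t(2) by metis
  moreover have "f (w + v + r) \<notin> B" if r: "r \<in> {1<..<3} \<inter> grid n" for r
  proof -
    have "1 + h \<le> r" "r \<le> 3 - h" using step[of 1 r] step[of r 3] r by (auto simp: grid_arith)
    then have "v + r \<in> {2 + h<..<5 - h} \<inter> grid n" using v v_bounds r h by (auto simp: grid_arith)
    then show ?thesis using no_hit by (simp add: add.assoc)
  qed
  ultimately show "(\<exists>r\<in>{1<..<4} \<inter> grid n. f (w + v + r) \<in> B) \<and> (\<forall>r\<in>{1<..<3} \<inter> grid n. f (w + v + r) \<notin> B)"
    by blast
qed

lemma dsat_phi1_neighbour:
  assumes n2: "2 \<le> n" and w: "w \<in> grid n" and phi1: "dsat n f w (phi1 (Atom B))"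
  defines "h \<equiv> 1 / real n"
  assumes early: "\<And>t. t \<in> grid n \<Longrightarrow> t \<le> w + 2 + h \<Longrightarrow> f t \<notin> B"
  shows "dsat n f (w - h) (phi1 (Atom B)) \<or> dsat n f (w + h) (phi1 (Atom B))"
proof -
  have n: "0 < n" using n2 by simp
  have h: "0 < h" "h \<le> 1/2" "real n * h = 1" using n2 by (auto simp: h_def field_simps)
  note grid_arith = grid_iff[OF n] ring_distribs mult.left_commute[of "real n"]
  note step = grid_less_imp_step_le[OF n, folded h_def]
  have before: "f t \<notin> B" if t: "t \<in> grid n" "t < w + 5 - h" for t
  proof (cases "t \<le> w + 2 + h")
    case False
    then have "t - w \<in> {2 + h<..<5 - h} \<inter> grid n" using t w h by (auto simp: grid_arith)
    then have "f (w + (t - w)) \<notin> B" using dsat_phi1_D(1)[OF n2 phi1, folded h_def] by blast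
    then show ?thesis by simp
  qed (use early t in auto)
  have hit: "f (w + 5 - h) \<in> B \<or> f (w + 5) \<in> B"
    using dsat_phi1_D(2)[OF n2 phi1, folded h_def] by (simp add: algebra_simps)
  show ?thesis
  proof (cases "f (w + 5 - h) \<in> B")
    case True
    have "dsat n f (w - h) (phi1 (Atom B))"
    proof (rule dsat_phi1_I[OF n2, folded h_def])
      fix r assume "r \<in> {2 + h<..<5 - h} \<inter> grid n"
      then show "f (w - h + r) \<notin> B" using w h by (intro before) (auto simp: grid_arith)
    qed (use True in \<open>simp add: algebra_simps\<close>)
    then show ?thesis ..
  next
    case False
    have "dsat n f (w + h) (phi1 (Atom B))"
    proof (rule dsat_phi1_I[OF n2, folded h_def])
      fix r assume r: "r \<in> {2 + h<..<5 - h} \<inter> grid n"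
      have t: "w + h + r \<in> grid n" using w r h by (auto simp: grid_arith)
      have "w + 5 - h \<in> grid n" using w h by (auto simp: grid_arith)
      then have "w + h + r \<le> w + 5 - h" using step[OF _ t] r by force
      then consider "w + h + r < w + 5 - h" | "w + h + r = w + 5 - h" by linarith
      then show "f (w + h + r) \<notin> B" using before[OF t] False by cases metis+
    qed (use False hit in \<open>simp add: algebra_simps\<close>)
    then show ?thesis ..
  qed
qed

lemma not_dsat_psi:
  assumes n2: "2 \<le> n" and f0: "f 0 \<notin> B"
  shows "\<not> dsat n f 0 (psi (Atom B))"
proof
  define h where "h = 1 / real n"
  have n: "0 < n" using n2 by simp
  have h: "0 < h" "h \<le> 1/2" "real n * h = 1" using n2 by (auto simp: h_def field_simps)
  note grid_arith = grid_iff[OF n] ring_distribs mult.left_commute[of "real n"]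
  assume "dsat n f 0 (psi (Atom B))"
  then have early: "\<forall>t\<in>{0<..<8} \<inter> grid n. f t \<notin> B"
    and "\<exists>s\<in>{1<..<2} \<inter> grid n. dsat n f s (phi2 (Atom B))"
    unfolding dsat.simps(1) dsat.simps(2-4)[of n f 0] add_0 by blast+
  then obtain s where s: "s \<in> {1<..<2} \<inter> grid n" "dsat n f s (phi2 (Atom B))" by blast
  have "s \<le> 2 - h" using grid_less_imp_step_le[OF n, of s 2] s(1) by (auto simp: grid_arith h_def)
  have "(2::real) \<in> grid n" by (simp add: grid_arith)
  with s(2) have "dsat n f (s + 2) (phi1 (Atom B)) \<and>
      (\<forall>u\<in>{1<..<3} \<inter> grid n - {2}. \<not> dsat n f (s + u) (phi1 (Atom B)))"
    by (subst (asm) dsat_Dia_exactly_at) auto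
  then have at2: "dsat n f (s + 2) (phi1 (Atom B))"
    and off2: "\<And>u. u \<in> {1<..<3} \<inter> grid n - {2} \<Longrightarrow> \<not> dsat n f (s + u) (phi1 (Atom B))"
    by blast+
  have "s + 2 \<in> grid n" using s(1) by (auto simp: grid_arith)
  moreover have "f t \<notin> B" if "t \<in> grid n" "t \<le> s + 2 + 2 + h" for t
    using early f0 that \<open>s \<le> 2 - h\<close> by (cases "t = 0") (auto simp: grid_arith)
  ultimately have "dsat n f (s + 2 - h) (phi1 (Atom B)) \<or> dsat n f (s + 2 + h) (phi1 (Atom B))"
    using dsat_phi1_neighbour[OF n2 _ at2, folded h_def] by blast
  moreover have "2 - h \<in> {1<..<3} \<inter> grid n - {2}" "2 + h \<in> {1<..<3} \<inter> grid n - {2}"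
    using h by (auto simp: grid_arith)
  ultimately show False using off2[of "2 - h"] off2[of "2 + h"] by (auto simp: algebra_simps)
qed

section \<open>Continuous semantics\<close>

lemma csat_Dia_exactly_at:
  assumes "a < b" "b < c"
  shows "csat f t (Conj (Dia {a<..<c} \<phi>) (Conj (Neg (Dia {a<..<b} \<phi>)) (Neg (Dia {b<..<c} \<phi>))))
    \<longleftrightarrow> csat f (t + b) \<phi> \<and> (\<forall>u\<in>{a<..<c} - {b}. \<not> csat f (t + u) \<phi>)"
proof -
  let ?D = "\<lambda>u. csat f (t + u) \<phi>"
  have b: "b \<in> {a<..<c}" using assms by simp
  have split: "{a<..<c} - {b} = {a<..<b} \<union> {b<..<c}"
    using assms by auto
  have "(\<exists>s\<in>{a<..<c}. ?D s) \<longleftrightarrow> ?D b" if "\<forall>u\<in>{a<..<c} - {b}. \<not> ?D u"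
    using that b by blast
  then show ?thesis unfolding split by auto
qed

lemma csat_phi1_unfold:
  "csat f w (phi1 (Atom B)) \<longleftrightarrow> (\<forall>v\<in>{1<..<2}.
      (\<exists>r\<in>{1<..<4}. f (w + v + r) \<in> B) \<and> (\<forall>r\<in>{1<..<3}. f (w + v + r) \<notin> B))"
  by (simp add: Box_def add.assoc)

lemma csat_phi1_D:
  assumes f: "continuous_on {0..} f" and B: "closed B" and w: "0 \<le> w"
    and phi1: "csat f w (phi1 (Atom B))"
  shows "\<forall>r\<in>{2<..<5}. f (w + r) \<notin> B" and "f (w + 5) \<in> B"
proof -
  have L: "(\<exists>r\<in>{1<..<4}. f (w + v + r) \<in> B) \<and> (\<forall>r\<in>{1<..<3}. f (w + v + r) \<notin> B)"
    if "v \<in> {1<..<2}" for v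
    using phi1 that unfolding csat_phi1_unfold by blast
  show no_hit: "\<forall>r\<in>{2<..<5}. f (w + r) \<notin> B"
  proof
    fix r :: real assume "r \<in> {2<..<5}"
    then have "1 + (r - 2) / 3 \<in> {1<..<2}" "1 + 2 * (r - 2) / 3 \<in> {1<..<3}" by auto
    then have "f (w + (1 + (r - 2) / 3) + (1 + 2 * (r - 2) / 3)) \<notin> B" using L by blast
    then show "f (w + r) \<notin> B" by argo
  qed
  have "\<exists>y\<in>{0..} \<inter> f -` B. dist y (w + 5) < \<epsilon>" if "0 < \<epsilon>" for \<epsilon>
  proof -
    define d where "d = min \<epsilon> 1 / 2"
    have d: "0 < d" "d < \<epsilon>" "d < 1" using \<open>0 < \<epsilon>\<close> by (auto simp: d_def)
    then have "1 + d \<in> {1<..<2}" by simp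
    then obtain r where r: "r \<in> {1<..<4}" "f (w + (1 + d) + r) \<in> B" using L by blast
    have "1 + d + r \<notin> {2<..<5}" using no_hit r(2) by (auto simp: add.assoc)
    then have "5 \<le> 1 + d + r" using r(1) d by auto
    then show ?thesis
      using r d w by (intro bexI[of _ "w + (1 + d) + r"]) (auto simp: dist_real_def)
  qed
  moreover have "closed ({0..} \<inter> f -` B)"
    using continuous_closed_preimage[OF f _ B] by simp
  ultimately have "w + 5 \<in> {0..} \<inter> f -` B"
    using closed_approachable by blast
  then show "f (w + 5) \<in> B" by simp
qed

lemma csat_phi1_I:
  assumes no_hit: "\<And>r. r \<in> {2<..<5} \<Longrightarrow> f (w + r) \<notin> B" and hit: "f (w + 5) \<in> B"
  shows "csat f w (phi1 (Atom B))"
  unfolding csat_phi1_unfold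
proof (intro ballI)
  fix v :: real assume v: "v \<in> {1<..<2}"
  then have "5 - v \<in> {1<..<4}" "w + v + (5 - v) = w + 5" by auto
  then have "\<exists>r\<in>{1<..<4}. f (w + v + r) \<in> B" using hit by metis
  moreover have "\<forall>r\<in>{1<..<3}. f (w + v + r) \<notin> B"
  proof
    fix r :: real assume "r \<in> {1<..<3}"
    then show "f (w + v + r) \<notin> B" using no_hit[of "v + r"] v by (simp add: add.assoc)
  qed
  ultimately show "(\<exists>r\<in>{1<..<4}. f (w + v + r) \<in> B) \<and> (\<forall>r\<in>{1<..<3}. f (w + v + r) \<notin> B)" ..
qed

lemma continuous_first_hit:
  fixes f :: "real \<Rightarrow> real"
  assumes f: "continuous_on {a..b} f" and B: "closed B" and hit: "f b \<in> B" and "a \<le> b"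
  obtains T where "T \<in> {a..b}" "f T \<in> B" "\<And>t. t \<in> {a..<T} \<Longrightarrow> f t \<notin> B"
proof -
  have "compact ({a..b} \<inter> ({a..b} \<inter> f -` B))"
    using continuous_closed_preimage[OF f closed_atLeastAtMost B] by (intro compact_Int_closed) auto
  then have "compact ({a..b} \<inter> f -` B)" by (simp add: Int_absorb)
  moreover have "b \<in> {a..b} \<inter> f -` B" using hit \<open>a \<le> b\<close> by simp
  ultimately obtain T where "T \<in> {a..b} \<inter> f -` B" "\<forall>t\<in>{a..b} \<inter> f -` B. T \<le> t"
    using compact_attains_inf by blast
  then have T: "T \<in> {a..b}" "f T \<in> B" and least: "\<And>t. t \<in> {a..b} \<Longrightarrow> f t \<in> B \<Longrightarrow> T \<le> t"
    by auto
  show ?thesis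
  proof (rule that[OF T])
    fix t assume "t \<in> {a..<T}"
    then show "f t \<notin> B" using least[of t] T(1) by fastforce
  qed
qed

lemma csat_psi_D:
  assumes f: "continuous_on {0..} f" and B: "closed B" and "csat f 0 (psi (Atom B))"
  shows "(\<forall>t\<in>{0..8}. f t \<notin> B) \<and> (\<exists>t\<in>{8<..<9}. f t \<in> B)"
proof -
  from \<open>csat f 0 (psi (Atom B))\<close> have f0: "f 0 \<notin> B" and early: "\<forall>t\<in>{0<..<8}. f t \<notin> B"
    and "\<exists>s\<in>{1<..<2}. csat f s (phi2 (Atom B))"
    unfolding csat.simps(1) csat.simps(2-4)[of f 0] add_0 by blast+
  then obtain s where s: "s \<in> {1<..<2}" "csat f s (phi2 (Atom B))" by blast
  then have "csat f (s + 2) (phi1 (Atom B))"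
    by (subst (asm) csat_Dia_exactly_at) auto
  moreover have "0 \<le> s + 2" using s(1) by simp
  ultimately have no_hit: "\<forall>r\<in>{2<..<5}. f (s + 2 + r) \<notin> B" and hit: "f (s + 2 + 5) \<in> B"
    using csat_phi1_D[OF f B] by blast+
  have "f 8 \<notin> B" using no_hit[rule_format, of "6 - s"] s(1) by simp
  then have "\<forall>t\<in>{0..8}. f t \<notin> B" using f0 early by (auto simp: le_less)
  moreover have "s + 7 \<in> {8<..<9}" "f (s + 7) \<in> B" using s(1) hit by (auto simp: add.assoc)
  ultimately show ?thesis by blast
qed

lemma csat_psi_I:
  assumes f: "continuous_on {0..} f" and B: "closed B"
    and below: "\<forall>t\<in>{0..8}. f t \<notin> B" and t1: "t1 \<in> {8<..<9}" "f t1 \<in> B"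
  shows "csat f 0 (psi (Atom B))"
proof -
  have cont: "continuous_on {8..t1} f" using f by (rule continuous_on_subset) auto
  have "8 \<le> t1" using t1(1) by simp
  then obtain T where T: "T \<in> {8..t1}" "f T \<in> B" and before_T: "\<And>t. t \<in> {8..<T} \<Longrightarrow> f t \<notin> B"
    using continuous_first_hit[OF cont B t1(2)] by blast
  have "T \<noteq> 8" using below T(2) by auto
  with T(1) t1(1) have T89: "8 < T" "T < 9" by auto
  have no_hit: "f t \<notin> B" if "0 \<le> t" "t < T" for t
    using below before_T that by (cases "t \<le> 8") auto
  define s where "s = T - 7"
  have s: "s \<in> {1<..<2}" using T89 by (simp add: s_def)
  have "csat f (s + 2) (phi1 (Atom B))"
    using no_hit T(2) s by (intro csat_phi1_I) (auto simp: s_def)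
  moreover have "\<not> csat f (s + u) (phi1 (Atom B))" if u: "u \<in> {1<..<3} - {2}" for u
  proof
    assume phi1: "csat f (s + u) (phi1 (Atom B))"
    have "0 \<le> s + u" using s u by simp
    note phi1_D = csat_phi1_D[OF f B this phi1]
    show False
    proof (cases "u < 2")
      case True
      then show False using phi1_D(2) no_hit[of "s + u + 5"] s u by (simp add: s_def)
    next
      case False
      then have "T - (s + u) \<in> {2<..<5}" using u by (auto simp: s_def)
      then have "f (s + u + (T - (s + u))) \<notin> B" using phi1_D(1) by blast
      then show False using T(2) by simp
    qed
  qed
  ultimately have "csat f s (phi2 (Atom B))"
    by (subst csat_Dia_exactly_at) auto
  then show ?thesis using below s by auto
qed

lemma csat_psi_iff:
  assumes "continuous_on {0..} f" and "closed B"
  shows "csat f 0 (psi (Atom B)) \<longleftrightarrow> (\<forall>t\<in>{0..8}. f t \<notin> B) \<and> (\<exists>t\<in>{8<..<9}. f t \<in> B)"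
  using csat_psi_D[OF assms] csat_psi_I[OF assms] by blast

section \<open>Dyadic points\<close>

lemma closure_Icc_Int_dyadics:
  assumes "0 \<le> a" "a < b"
  shows "closure ({a..b} \<inter> dyadics) = {a..(b::real)}"
  using closure_dyadic_rationals_in_convex_set_pos_1[of "{a..b}"] assms
  by (simp add: dyadics_def)

lemma countable_dyadics: "countable (dyadics :: real set)"
  by (simp add: dyadics_def)

lemma continuous_less_on_Icc_iff_dyadics:
  fixes f :: "real \<Rightarrow> real"
  assumes f: "continuous_on {a..b} f" and "0 \<le> a" "a < b"
  shows "(\<forall>t\<in>{a..b}. f t < c) \<longleftrightarrow> (\<exists>k. \<forall>q\<in>{a..b} \<inter> dyadics. f q \<le> c - inverse (real (Suc k)))"
proof
  assume below: "\<forall>t\<in>{a..b}. f t < c"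
  have "{a..b} \<noteq> {}" using \<open>a < b\<close> by simp
  then obtain x where x: "x \<in> {a..b}" "\<forall>t\<in>{a..b}. f t \<le> f x"
    using continuous_attains_sup[OF compact_Icc _ f] by blast
  then have "0 < c - f x" using below by simp
  then obtain k where k: "inverse (real (Suc k)) < c - f x"
    using reals_Archimedean by blast
  have "f q \<le> c - inverse (real (Suc k))" if "q \<in> {a..b} \<inter> dyadics" for q
    using that x(2) k by (smt (verit) IntD1)
  then show "\<exists>k. \<forall>q\<in>{a..b} \<inter> dyadics. f q \<le> c - inverse (real (Suc k))" by blast
next
  assume "\<exists>k. \<forall>q\<in>{a..b} \<inter> dyadics. f q \<le> c - inverse (real (Suc k))"
  then obtain k where k: "\<And>q. q \<in> {a..b} \<inter> dyadics \<Longrightarrow> f q \<le> c - inverse (real (Suc k))" by blast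
  have closure: "closure ({a..b} \<inter> dyadics) = {a..b}"
    using closure_Icc_Int_dyadics[OF assms(2,3)] .
  show "\<forall>t\<in>{a..b}. f t < c"
  proof
    fix t assume "t \<in> {a..b}"
    then have "f t \<le> c - inverse (real (Suc k))"
      using continuous_le_on_closure[of "{a..b} \<inter> dyadics" f t, unfolded closure] f k by blast
    moreover have "0 < inverse (real (Suc k))" by simp
    ultimately show "f t < c" by linarith
  qed
qed

lemma continuous_le_if_le_on_dyadic_grid:
  fixes f :: "real \<Rightarrow> real"
  assumes f: "continuous_on {0..T} f" and "0 < T"
    and grid: "\<And>k j. j \<le> 2 ^ k \<Longrightarrow> f (T * real j / 2 ^ k) \<le> a"
    and t: "t \<in> {0..T}"
  shows "f t \<le> a"
proof -
  have closure: "closure ({0..1} \<inter> dyadics) = {0..1::real}"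
    by (rule closure_Icc_Int_dyadics) simp_all
  have "(\<lambda>x. T * x) ` {0..1} \<subseteq> {0..T}"
    using \<open>0 < T\<close> by (auto intro: mult_left_le)
  then have cont: "continuous_on (closure ({0..1} \<inter> dyadics)) (\<lambda>x. f (T * x))"
    unfolding closure by (intro continuous_on_compose2[OF f] continuous_intros)
  have below: "f (T * x) \<le> a" if x_dyadic: "x \<in> {0..1} \<inter> dyadics" for x
  proof -
    obtain k j where x: "x = real j / 2 ^ k" using x_dyadic unfolding dyadics_def by blast
    then have "real j \<le> 2 ^ k" using x_dyadic by (simp add: divide_le_eq)
    then have "j \<le> 2 ^ k" by (metis of_nat_le_iff of_nat_numeral of_nat_power)
    then show ?thesis using grid x by simp
  qed
  have "t / T \<in> closure ({0..1} \<inter> dyadics)"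
    unfolding closure using t \<open>0 < T\<close> by simp
  then have "f (T * (t / T)) \<le> a"
    using continuous_le_on_closure[OF cont _ below] by blast
  then show ?thesis using \<open>0 < T\<close> by simp
qed

section \<open>Brownian motion\<close>

lemma brownian_motion_prob_space: "brownian_motion M X \<Longrightarrow> prob_space M"
  by (simp add: brownian_motion_def)

lemma brownian_motion_measurable: "brownian_motion M X \<Longrightarrow> 0 \<le> t \<Longrightarrow> X t \<in> borel_measurable M"
  by (simp add: brownian_motion_def)

lemma brownian_motion_zero: "brownian_motion M X \<Longrightarrow> \<omega> \<in> space M \<Longrightarrow> X 0 \<omega> = 0"
  by (simp add: brownian_motion_def)

lemma brownian_motion_continuous:
  "brownian_motion M X \<Longrightarrow> \<omega> \<in> space M \<Longrightarrow> continuous_on {0..} (\<lambda>t. X t \<omega>)"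
  by (simp add: brownian_motion_def)

lemma brownian_motion_increment_normal:
  "brownian_motion M X \<Longrightarrow> 0 \<le> s \<Longrightarrow> s < t \<Longrightarrow>
    distributed M lborel (\<lambda>\<omega>. X t \<omega> - X s \<omega>) (\<lambda>x. ennreal (normal_density 0 (sqrt (t - s)) x))"
  by (simp add: brownian_motion_def)

lemma brownian_motion_indep_increments:
  "brownian_motion M X \<Longrightarrow> 0 \<le> ts 0 \<Longrightarrow> (\<And>i. i < n \<Longrightarrow> ts i < ts (Suc i)) \<Longrightarrow>
    prob_space.indep_vars M (\<lambda>_. borel) (\<lambda>i \<omega>. X (ts (Suc i)) \<omega> - X (ts i) \<omega>) {..<n}"
  unfolding brownian_motion_def by blast

lemma brownian_motion_normal:
  assumes BM: "brownian_motion M X" and "0 < t"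
  shows "distributed M lborel (X t) (\<lambda>x. ennreal (normal_density 0 (sqrt t) x))"
proof -
  have eq: "X t \<omega> - X 0 \<omega> = X t \<omega>" if "\<omega> \<in> space M" for \<omega>
    using brownian_motion_zero[OF BM that] by simp
  have "distributed M lborel (\<lambda>\<omega>. X t \<omega> - X 0 \<omega>) (\<lambda>x. ennreal (normal_density 0 (sqrt t) x))"
    using brownian_motion_increment_normal[OF BM order_refl \<open>0 < t\<close>] by simp
  moreover have "distr M lborel (\<lambda>\<omega>. X t \<omega> - X 0 \<omega>) = distr M lborel (X t)"
    by (rule distr_cong) (simp_all add: eq)
  moreover have "(\<lambda>\<omega>. X t \<omega> - X 0 \<omega>) \<in> borel_measurable M \<longleftrightarrow> X t \<in> borel_measurable M"
    by (rule measurable_cong) (simp add: eq)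
  ultimately show ?thesis by (simp add: distributed_def)
qed

lemma strict_mono_nonneg:
  fixes f :: "nat \<Rightarrow> 'a::{linorder, zero}"
  assumes "strict_mono f" "f 0 = 0"
  shows "0 \<le> f j"
  using strict_monoD[OF assms(1), of 0 j] assms(2) by (cases "j = 0") auto

lemma brownian_motion_telescope:
  assumes BM: "brownian_motion M X" and "ts 0 = 0" and "\<omega> \<in> space M"
  shows "(\<Sum>i<j. X (ts (Suc i)) \<omega> - X (ts i) \<omega>) = X (ts j) \<omega>"
  using sum_lessThan_telescope[of "\<lambda>i. X (ts i) \<omega>" j] brownian_motion_zero[OF BM assms(3)] assms(2)
  by simp

lemma (in prob_space) prob_normal_symmetric:
  assumes Y: "distributed M lborel Y (\<lambda>x. ennreal (normal_density 0 \<sigma> x))"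
    and "0 < \<sigma>" and A: "A \<in> sets borel"
  shows "prob {\<omega>\<in>space M. Y \<omega> \<in> A} = prob {\<omega>\<in>space M. - Y \<omega> \<in> A}"
proof -
  have "distributed M lborel (\<lambda>x. 0 + (-1) * Y x) (\<lambda>x. ennreal (normal_density (0 + (-1) * 0) (\<bar>-1\<bar> * \<sigma>) x))"
    by (rule normal_density_affine[OF Y \<open>0 < \<sigma>\<close>]) simp
  then have Y': "distributed M lborel (\<lambda>x. - Y x) (\<lambda>x. ennreal (normal_density 0 \<sigma> x))"
    by simp
  have "emeasure M (Y -` A \<inter> space M) = emeasure M ((\<lambda>x. - Y x) -` A \<inter> space M)"
    using distributed_emeasure[OF Y] distributed_emeasure[OF Y'] A by simp
  then show ?thesis by (simp add: measure_def vimage_def Int_def conj_commute)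
qed

lemma (in prob_space) prob_normal_interval_pos:
  assumes Y: "distributed M lborel Y (\<lambda>x. ennreal (normal_density \<mu> \<sigma> x))"
    and "0 < \<sigma>" and "c < d"
  shows "0 < prob {\<omega>\<in>space M. c < Y \<omega> \<and> Y \<omega> < d}"
proof -
  have eq: "emeasure M (Y -` {c<..<d} \<inter> space M) =
      (\<integral>\<^sup>+x. ennreal (normal_density \<mu> \<sigma> x) * indicator {c<..<d} x \<partial>lborel)"
    using distributed_emeasure[OF Y] by simp
  have "emeasure M (Y -` {c<..<d} \<inter> space M) \<noteq> 0"
  proof
    assume "emeasure M (Y -` {c<..<d} \<inter> space M) = 0"
    then have "AE x in lborel. ennreal (normal_density \<mu> \<sigma> x) * indicator {c<..<d} x = 0"
      unfolding eq by (subst (asm) nn_integral_0_iff_AE) auto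
    then have "AE x in lborel. x \<notin> {c<..<d}"
      using normal_density_pos[OF \<open>0 < \<sigma>\<close>, THEN less_imp_neq, of \<mu>]
      by (auto elim!: AE_mp simp: indicator_def)
    then have "emeasure lborel {c<..<d} = 0"
      by (subst (asm) AE_iff_measurable[of "{c<..<d}"]) auto
    then show False using \<open>c < d\<close> by simp
  qed
  then have "prob (Y -` {c<..<d} \<inter> space M) \<noteq> 0"
    by (simp add: emeasure_eq_measure)
  moreover have "Y -` {c<..<d} \<inter> space M = {\<omega>\<in>space M. c < Y \<omega> \<and> Y \<omega> < d}" by auto
  ultimately show ?thesis using measure_nonneg[of M] by (simp add: order_less_le)
qed

lemma brownian_motion_indep_past_increment:
  assumes BM: "brownian_motion M X" and ts0: "ts 0 = 0"
    and inc: "\<And>i. i \<le> k \<Longrightarrow> ts i < ts (Suc i)"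
    and Q: "Measurable.pred (PiM {..k} (\<lambda>_. borel)) Q" and S: "S \<in> sets borel"
  shows "measure M {\<omega>\<in>space M. Q (\<lambda>j\<in>{..k}. X (ts j) \<omega>) \<and> X (ts (Suc k)) \<omega> - X (ts k) \<omega> \<in> S}
       = measure M {\<omega>\<in>space M. Q (\<lambda>j\<in>{..k}. X (ts j) \<omega>)} *
         measure M {\<omega>\<in>space M. X (ts (Suc k)) \<omega> - X (ts k) \<omega> \<in> S}"
proof -
  interpret prob_space M using brownian_motion_prob_space[OF BM] .
  define D where "D i \<omega> = X (ts (Suc i)) \<omega> - X (ts i) \<omega>" for i \<omega>
  have "indep_vars (\<lambda>_. borel) D {..<Suc k}"
    unfolding D_def by (rule brownian_motion_indep_increments[OF BM]) (use ts0 inc in auto)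
  then have indep: "indep_var (PiM {..<k} (\<lambda>_. borel)) (\<lambda>\<omega>. restrict (\<lambda>i. D i \<omega>) {..<k})
                      (PiM {k} (\<lambda>_. borel)) (\<lambda>\<omega>. restrict (\<lambda>i. D i \<omega>) {k})"
    by (rule indep_var_restrict) auto
  \<comment> \<open>the past values are the partial sums of the earlier increments\<close>
  define \<Sigma> where "\<Sigma> x = (\<lambda>j\<in>{..k}. \<Sum>i<j. x i)" for x :: "nat \<Rightarrow> real"
  have \<Sigma>: "\<Sigma> \<in> measurable (PiM {..<k} (\<lambda>_. borel)) (PiM {..k} (\<lambda>_. borel))"
    unfolding \<Sigma>_def by (intro measurable_restrict borel_measurable_sum measurable_component_singleton) auto
  have partial_sums: "\<Sigma> (restrict (\<lambda>i. D i \<omega>) {..<k}) = (\<lambda>j\<in>{..k}. X (ts j) \<omega>)" if "\<omega> \<in> space M" for \<omega>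
  proof
    fix j show "\<Sigma> (restrict (\<lambda>i. D i \<omega>) {..<k}) j = (\<lambda>j\<in>{..k}. X (ts j) \<omega>) j"
    proof (cases "j \<le> k")
      case True
      have "(\<Sum>i<j. restrict (\<lambda>i. D i \<omega>) {..<k} i) = (\<Sum>i<j. X (ts (Suc i)) \<omega> - X (ts i) \<omega>)"
        using True by (intro sum.cong) (auto simp: D_def)
      also have "\<dots> = X (ts j) \<omega>" by (rule brownian_motion_telescope[where ts = ts, OF BM ts0 that])
      finally show ?thesis using True by (simp add: \<Sigma>_def)
    qed (simp add: \<Sigma>_def)
  qed
  define A where "A = \<Sigma> -` {x \<in> space (PiM {..k} (\<lambda>_. borel)). Q x} \<inter> space (PiM {..<k} (\<lambda>_. borel))"
  define C where "C = (\<lambda>y. y k) -` S \<inter> space (PiM {k} (\<lambda>_. borel :: real measure))"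
  have A: "A \<in> sets (PiM {..<k} (\<lambda>_. borel))"
    unfolding A_def using \<Sigma> Q by (intro measurable_sets) (auto simp: pred_def)
  have C: "C \<in> sets (PiM {k} (\<lambda>_. borel))"
    unfolding C_def using S by (intro measurable_sets[OF measurable_component_singleton]) auto
  have "prob ((\<lambda>\<omega>. (restrict (\<lambda>i. D i \<omega>) {..<k}, restrict (\<lambda>i. D i \<omega>) {k})) -` (A \<times> C) \<inter> space M) =
      prob ((\<lambda>\<omega>. restrict (\<lambda>i. D i \<omega>) {..<k}) -` A \<inter> space M) *
      prob ((\<lambda>\<omega>. restrict (\<lambda>i. D i \<omega>) {k}) -` C \<inter> space M)"
    by (rule indep_varD[OF indep A C])
  moreover have "(\<lambda>\<omega>. (restrict (\<lambda>i. D i \<omega>) {..<k}, restrict (\<lambda>i. D i \<omega>) {k})) -` (A \<times> C) \<inter> space M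
     = {\<omega>\<in>space M. Q (\<lambda>j\<in>{..k}. X (ts j) \<omega>) \<and> X (ts (Suc k)) \<omega> - X (ts k) \<omega> \<in> S}"
    using partial_sums unfolding A_def C_def by (auto simp: D_def space_PiM PiE_iff)
  moreover have "(\<lambda>\<omega>. restrict (\<lambda>i. D i \<omega>) {..<k}) -` A \<inter> space M = {\<omega>\<in>space M. Q (\<lambda>j\<in>{..k}. X (ts j) \<omega>)}"
    using partial_sums unfolding A_def by (auto simp: space_PiM PiE_iff)
  moreover have "(\<lambda>\<omega>. restrict (\<lambda>i. D i \<omega>) {k}) -` C \<inter> space M
      = {\<omega>\<in>space M. X (ts (Suc k)) \<omega> - X (ts k) \<omega> \<in> S}"
    unfolding C_def by (auto simp: D_def space_PiM)
  ultimately show ?thesis by simp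
qed

lemma (in prob_space) prob_le_neg_tendsto_0:
  assumes [measurable]: "Y \<in> borel_measurable M"
  shows "(\<lambda>i. prob {\<omega>\<in>space M. Y \<omega> \<le> - real i}) \<longlonglongrightarrow> 0"
proof -
  define L where "L i = {\<omega>\<in>space M. Y \<omega> \<le> - real i}" for i :: nat
  have "(\<Inter>i. L i) = {}"
  proof (intro equals0I)
    fix \<omega> assume \<omega>: "\<omega> \<in> (\<Inter>i. L i)"
    obtain i :: nat where "- Y \<omega> < real i" using reals_Archimedean2 by blast
    moreover have "\<omega> \<in> L i" using \<omega> by blast
    ultimately show False by (simp add: L_def)
  qed
  moreover have "range L \<subseteq> sets M" "decseq L" unfolding L_def decseq_def by auto
  ultimately show ?thesis
    using finite_Lim_measure_decseq[of L] by (simp add: L_def)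
qed

lemma (in prob_space) prob_normal_tail_less_interval:
  assumes Y: "distributed M lborel Y (\<lambda>x. ennreal (normal_density 0 \<sigma> x))"
    and "0 < \<sigma>" and "0 < a"
  obtains b where "a \<le> b" "prob {\<omega>\<in>space M. a < Y \<omega>} < prob {\<omega>\<in>space M. -b < Y \<omega> \<and> Y \<omega> < a}"
proof -
  have [measurable]: "Y \<in> borel_measurable M"
    using distributed_measurable[OF Y] by simp
  define L where "L i = {\<omega>\<in>space M. Y \<omega> \<le> - real i}" for i :: nat
  have "0 < prob {\<omega>\<in>space M. -a < Y \<omega> \<and> Y \<omega> < a}"
    using prob_normal_interval_pos[OF Y \<open>0 < \<sigma>\<close>] \<open>0 < a\<close> by simp
  with prob_le_neg_tendsto_0 have "\<forall>\<^sub>F i in sequentially. prob (L i) < prob {\<omega>\<in>space M. -a < Y \<omega> \<and> Y \<omega> < a}"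
    unfolding L_def by (rule order_tendstoD(2)) simp
  then obtain i0 where i0: "\<And>i. i0 \<le> i \<Longrightarrow> prob (L i) < prob {\<omega>\<in>space M. -a < Y \<omega> \<and> Y \<omega> < a}"
    unfolding eventually_sequentially by blast
  define i where "i = max i0 (nat \<lceil>a\<rceil>)"
  have "a \<le> real (nat \<lceil>a\<rceil>)" by (rule real_nat_ceiling_ge)
  then have i: "a \<le> real i" "prob (L i) < prob {\<omega>\<in>space M. -a < Y \<omega> \<and> Y \<omega> < a}"
    using i0[of i] by (auto simp: i_def)
  define b where "b = real i"
  have "{\<omega>\<in>space M. - Y \<omega> \<in> {a<..}} = {\<omega>\<in>space M. Y \<omega> < -a}" by auto
  then have "prob {\<omega>\<in>space M. a < Y \<omega>} = prob {\<omega>\<in>space M. Y \<omega> < -a}"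
    using prob_normal_symmetric[OF Y \<open>0 < \<sigma>\<close>, of "{a<..}"] by simp
  also have "\<dots> \<le> prob (L i \<union> {\<omega>\<in>space M. -b < Y \<omega> \<and> Y \<omega> < -a})"
    by (rule finite_measure_mono) (auto simp: L_def b_def)
  also have "\<dots> \<le> prob (L i) + prob {\<omega>\<in>space M. -b < Y \<omega> \<and> Y \<omega> < -a}"
    by (rule measure_Un_le) (auto simp: L_def)
  also have "\<dots> < prob {\<omega>\<in>space M. -a < Y \<omega> \<and> Y \<omega> < a} + prob {\<omega>\<in>space M. -b < Y \<omega> \<and> Y \<omega> < -a}"
    using i(2) by simp
  also have "\<dots> = prob ({\<omega>\<in>space M. -a < Y \<omega> \<and> Y \<omega> < a} \<union> {\<omega>\<in>space M. -b < Y \<omega> \<and> Y \<omega> < -a})"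
    by (rule finite_measure_Union[symmetric]) auto
  also have "\<dots> \<le> prob {\<omega>\<in>space M. -b < Y \<omega> \<and> Y \<omega> < a}"
    using i(1) \<open>0 < a\<close> by (intro finite_measure_mono) (auto simp: b_def)
  finally show ?thesis using i(1) by (intro that[of b]) (auto simp: b_def)
qed

lemma brownian_motion_reflection_first_crossing:
  fixes tt :: "nat \<Rightarrow> real" and a :: real
  assumes BM: "brownian_motion M X" and tt: "strict_mono tt" "tt 0 = 0" and "k < N"
  defines "C \<equiv> {\<omega>\<in>space M. (\<forall>j<k. X (tt j) \<omega> < a) \<and> a \<le> X (tt k) \<omega>}"
  shows "measure M (C \<inter> {\<omega>\<in>space M. X (tt N) \<omega> < a}) \<le> measure M (C \<inter> {\<omega>\<in>space M. a < X (tt N) \<omega>})"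
proof -
  interpret prob_space M using brownian_motion_prob_space[OF BM] .
  have tt_nonneg: "0 \<le> tt j" for j by (rule strict_mono_nonneg[OF tt])
  have [measurable]: "X (tt j) \<in> borel_measurable M" for j
    by (rule brownian_motion_measurable[OF BM tt_nonneg])
  define incr where "incr S = {\<omega>\<in>space M. X (tt N) \<omega> - X (tt k) \<omega> \<in> S}" for S
  have C_sets: "C \<in> sets M" unfolding C_def by measurable
  have incr_sets: "incr S \<in> sets M" if [measurable]: "S \<in> sets borel" for S
    unfolding incr_def by measurable
  \<comment> \<open>C depends only on the walk up to time tt k, so it is independent of the increment\<close>
  define ts where "ts i = (if i \<le> k then tt i else tt N)" for i
  have ts_inc: "ts i < ts (Suc i)" if "i \<le> k" for i
    using that \<open>k < N\<close> strict_monoD[OF tt(1)] by (auto simp: ts_def)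
  have ts: "ts 0 = 0" "ts (Suc k) = tt N" "ts k = tt k" using tt(2) by (simp_all add: ts_def)
  let ?Q = "\<lambda>x. (\<forall>j\<in>{..<k}. x j < a) \<and> a \<le> x k"
  have Q: "Measurable.pred (PiM {..k} (\<lambda>_. borel)) ?Q" by measurable
  have C_eq: "C = {\<omega>\<in>space M. ?Q (\<lambda>j\<in>{..k}. X (ts j) \<omega>)}"
    by (auto simp: C_def ts_def)
  have split: "prob (C \<inter> incr S) = prob C * prob (incr S)" if "S \<in> sets borel" for S
  proof -
    have eq: "C \<inter> incr S =
        {\<omega>\<in>space M. ?Q (\<lambda>j\<in>{..k}. X (ts j) \<omega>) \<and> X (tt N) \<omega> - X (tt k) \<omega> \<in> S}"
      unfolding C_eq incr_def by blast
    show ?thesis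
      using brownian_motion_indep_past_increment[OF BM ts(1) ts_inc Q that]
      unfolding eq unfolding C_eq incr_def ts(2,3) .
  qed
  have "distributed M lborel (\<lambda>\<omega>. X (tt N) \<omega> - X (tt k) \<omega>)
      (\<lambda>x. ennreal (normal_density 0 (sqrt (tt N - tt k)) x))"
    by (rule brownian_motion_increment_normal[OF BM tt_nonneg strict_monoD[OF tt(1) \<open>k < N\<close>]])
  from prob_normal_symmetric[OF this _ borel_open[OF open_lessThan[of 0]]]
  have symmetric: "prob (incr {..<0}) = prob (incr {0<..})"
    using strict_monoD[OF tt(1) \<open>k < N\<close>] by (simp add: incr_def)
  have "prob (C \<inter> {\<omega>\<in>space M. X (tt N) \<omega> < a}) \<le> prob (C \<inter> incr {..<0})"
    using C_sets incr_sets by (intro finite_measure_mono) (auto simp: C_def incr_def)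
  also have "\<dots> = prob (C \<inter> incr {0<..})"
    by (simp only: split symmetric borel_open open_lessThan open_greaterThan)
  also have "\<dots> \<le> prob (C \<inter> {\<omega>\<in>space M. a < X (tt N) \<omega>})"
    using C_sets by (intro finite_measure_mono sets.Int) (auto simp: C_def incr_def)
  finally show ?thesis .
qed

lemma brownian_motion_reflection_le:
  fixes tt :: "nat \<Rightarrow> real"
  assumes BM: "brownian_motion M X" and tt: "strict_mono tt" "tt 0 = 0"
  shows "measure M {\<omega>\<in>space M. (\<exists>j\<le>N. a \<le> X (tt j) \<omega>) \<and> X (tt N) \<omega> < a}
           \<le> measure M {\<omega>\<in>space M. a < X (tt N) \<omega>}"
proof -
  interpret prob_space M using brownian_motion_prob_space[OF BM] .
  have [measurable]: "X (tt j) \<in> borel_measurable M" for j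
    by (rule brownian_motion_measurable[OF BM strict_mono_nonneg[OF tt]])
  define C where "C k = {\<omega>\<in>space M. (\<forall>j<k. X (tt j) \<omega> < a) \<and> a \<le> X (tt k) \<omega>}" for k
  define Lo where "Lo k = C k \<inter> {\<omega>\<in>space M. X (tt N) \<omega> < a}" for k
  define Hi where "Hi k = C k \<inter> {\<omega>\<in>space M. a < X (tt N) \<omega>}" for k
  have Lo_sets: "Lo k \<in> sets M" and Hi_sets: "Hi k \<in> sets M" for k
    unfolding Lo_def Hi_def C_def by (intro sets.Int; measurable)+
  have Lo_le_Hi: "prob (Lo k) \<le> prob (Hi k)" if "k \<le> N" for k
  proof (cases "k = N")
    case True
    then have "Lo k = {}" by (auto simp: Lo_def C_def)
    then show ?thesis by simp
  next
    case False
    with \<open>k \<le> N\<close> have "k < N" by simp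
    then show ?thesis
      unfolding Lo_def Hi_def C_def by (rule brownian_motion_reflection_first_crossing[OF BM tt])
  qed
  have disjoint: "disjoint_family_on F {..N}" if F: "\<And>k. F k \<subseteq> C k" for F
  proof -
    have "C k \<inter> C k' = {}" if "k < k'" for k k'
    proof (intro equals0I)
      fix \<omega> assume "\<omega> \<in> C k \<inter> C k'"
      then have "X (tt k) \<omega> < a" "a \<le> X (tt k) \<omega>" using that by (auto simp: C_def)
      then show False by simp
    qed
    then have "F k \<inter> F k' = {}" if "k \<noteq> k'" for k k'
      using that F[of k] F[of k'] by (cases k k' rule: linorder_cases) blast+
    then show ?thesis by (simp add: disjoint_family_on_def)
  qed
  have "{\<omega>\<in>space M. (\<exists>j\<le>N. a \<le> X (tt j) \<omega>) \<and> X (tt N) \<omega> < a} \<subseteq> (\<Union>k\<le>N. Lo k)"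
  proof
    fix \<omega> assume \<omega>: "\<omega> \<in> {\<omega>\<in>space M. (\<exists>j\<le>N. a \<le> X (tt j) \<omega>) \<and> X (tt N) \<omega> < a}"
    then obtain j where j: "j \<le> N" "a \<le> X (tt j) \<omega>" by blast
    then obtain k where k: "a \<le> X (tt k) \<omega>" "\<forall>i<k. \<not> a \<le> X (tt i) \<omega>"
      using exists_least_iff[of "\<lambda>i. a \<le> X (tt i) \<omega>"] by blast
    with j have "k \<le> N" by (meson le_trans not_less)
    then show "\<omega> \<in> (\<Union>k\<le>N. Lo k)" using \<omega> k by (auto simp: Lo_def C_def not_le)
  qed
  then have "measure M {\<omega>\<in>space M. (\<exists>j\<le>N. a \<le> X (tt j) \<omega>) \<and> X (tt N) \<omega> < a} \<le> prob (\<Union>k\<le>N. Lo k)"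
    using Lo_sets by (intro finite_measure_mono) auto
  also have "\<dots> = (\<Sum>k\<le>N. prob (Lo k))"
    using Lo_sets by (intro finite_measure_finite_Union disjoint) (auto simp: Lo_def)
  also have "\<dots> \<le> (\<Sum>k\<le>N. prob (Hi k))" by (rule sum_mono) (use Lo_le_Hi in auto)
  also have "\<dots> = prob (\<Union>k\<le>N. Hi k)"
    using Hi_sets by (intro finite_measure_finite_Union[symmetric] disjoint) (auto simp: Hi_def)
  also have "\<dots> \<le> measure M {\<omega>\<in>space M. a < X (tt N) \<omega>}"
    by (rule finite_measure_mono) (auto simp: Hi_def C_def)
  finally show ?thesis .
qed

lemma brownian_motion_prob_grid_below:
  fixes tt :: "nat \<Rightarrow> real"
  assumes BM: "brownian_motion M X" and tt: "strict_mono tt" "tt 0 = 0"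
  shows "measure M {\<omega>\<in>space M. -b < X (tt N) \<omega> \<and> X (tt N) \<omega> < a} - measure M {\<omega>\<in>space M. a < X (tt N) \<omega>}
    \<le> measure M {\<omega>\<in>space M. (\<forall>j\<le>N. X (tt j) \<omega> < a) \<and> -b < X (tt N) \<omega>}"
proof -
  interpret prob_space M using brownian_motion_prob_space[OF BM] .
  have [measurable]: "X (tt j) \<in> borel_measurable M" for j
    by (rule brownian_motion_measurable[OF BM strict_mono_nonneg[OF tt]])
  have "prob {\<omega>\<in>space M. -b < X (tt N) \<omega> \<and> X (tt N) \<omega> < a}
      \<le> prob ({\<omega>\<in>space M. (\<forall>j\<le>N. X (tt j) \<omega> < a) \<and> -b < X (tt N) \<omega>} \<union>
               {\<omega>\<in>space M. (\<exists>j\<le>N. a \<le> X (tt j) \<omega>) \<and> X (tt N) \<omega> < a})"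
    by (rule finite_measure_mono) (auto simp: not_less[symmetric])
  also have "\<dots> \<le> prob {\<omega>\<in>space M. (\<forall>j\<le>N. X (tt j) \<omega> < a) \<and> -b < X (tt N) \<omega>} +
      prob {\<omega>\<in>space M. (\<exists>j\<le>N. a \<le> X (tt j) \<omega>) \<and> X (tt N) \<omega> < a}"
    by (rule measure_Un_le) auto
  also have "\<dots> \<le> prob {\<omega>\<in>space M. (\<forall>j\<le>N. X (tt j) \<omega> < a) \<and> -b < X (tt N) \<omega>} +
      prob {\<omega>\<in>space M. a < X (tt N) \<omega>}"
    using brownian_motion_reflection_le[OF BM tt] by simp
  finally show ?thesis by simp
qed

lemma brownian_motion_sets_less_on_Icc:
  assumes BM: "brownian_motion M X" and "0 \<le> a" "a < b"
  shows "{\<omega>\<in>space M. \<forall>t\<in>{a..b}. X t \<omega> < c} \<in> sets M"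
proof -
  have "{\<omega>\<in>space M. \<forall>t\<in>{a..b}. X t \<omega> < c} =
      {\<omega>\<in>space M. \<exists>k. \<forall>q\<in>{a..b} \<inter> dyadics. X q \<omega> \<le> c - inverse (real (Suc k))}"
  proof (intro Collect_cong conj_cong refl)
    fix \<omega> assume "\<omega> \<in> space M"
    have "continuous_on {a..b} (\<lambda>t. X t \<omega>)"
      using brownian_motion_continuous[OF BM \<open>\<omega> \<in> space M\<close>]
      by (rule continuous_on_subset) (use assms in auto)
    then show "(\<forall>t\<in>{a..b}. X t \<omega> < c) \<longleftrightarrow>
        (\<exists>k. \<forall>q\<in>{a..b} \<inter> dyadics. X q \<omega> \<le> c - inverse (real (Suc k)))"
      by (rule continuous_less_on_Icc_iff_dyadics[OF _ assms(2,3)])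
  qed
  also have "\<dots> \<in> sets M"
  proof (intro sets.sets_Collect_countable_Ex sets.sets_Collect_countable_All')
    fix k q assume "q \<in> {a..b} \<inter> dyadics"
    then have [measurable]: "X q \<in> borel_measurable M"
      using brownian_motion_measurable[OF BM] \<open>0 \<le> a\<close> by auto
    show "{\<omega>\<in>space M. X q \<omega> \<le> c - inverse (real (Suc k))} \<in> sets M" by measurable
  qed (simp add: countable_dyadics)
  finally show ?thesis .
qed

lemma brownian_motion_sets_below_then_reaches:
  assumes BM: "brownian_motion M X" and "0 < T" "T < T'"
  shows "{\<omega>\<in>space M. (\<forall>t\<in>{0..T}. X t \<omega> < c) \<and> (\<exists>t\<in>{T<..<T'}. c \<le> X t \<omega>)} \<in> sets M"
proof -
  define u where "u = T' - T"
  have "0 < u" using assms(3) by (simp add: u_def)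
  define e where "e j = u * inverse (real (Suc j)) / 3" for j
  have e: "0 < e j" "T + e j < T' - e j" for j
  proof -
    have "inverse (real (Suc j)) \<le> 1" by (simp add: inverse_le_1_iff)
    then have "u * inverse (real (Suc j)) \<le> u" using \<open>0 < u\<close> by (simp add: mult_left_le)
    then show "T + e j < T' - e j" using \<open>0 < u\<close> u_def unfolding e_def by linarith
    show "0 < e j" using \<open>0 < u\<close> by (simp add: e_def)
  qed
  define A where "A j = {\<omega>\<in>space M. \<forall>t\<in>{T + e j..T' - e j}. X t \<omega> < c}" for j
  have A: "A j \<in> sets M" for j
    unfolding A_def using e[of j] \<open>0 < T\<close> by (intro brownian_motion_sets_less_on_Icc[OF BM]) auto
  have "(\<exists>t\<in>{T<..<T'}. c \<le> X t \<omega>) \<longleftrightarrow> (\<exists>j. \<exists>t\<in>{T + e j..T' - e j}. c \<le> X t \<omega>)" for \<omega>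
  proof
    assume "\<exists>t\<in>{T<..<T'}. c \<le> X t \<omega>"
    then obtain t where t: "T < t" "t < T'" "c \<le> X t \<omega>" by auto
    define m where "m = min (t - T) (T' - t)"
    have "0 < m" using t by (simp add: m_def)
    then have "0 < 3 * m / u" using \<open>0 < u\<close> by simp
    then obtain j where "inverse (real (Suc j)) < 3 * m / u"
      using reals_Archimedean by blast
    then have "u * inverse (real (Suc j)) < u * (3 * m / u)"
      using \<open>0 < u\<close> by (rule mult_strict_left_mono)
    then have "e j < m" using \<open>0 < u\<close> by (simp add: e_def)
    then have "t \<in> {T + e j..T' - e j}" by (auto simp: m_def)
    then show "\<exists>j. \<exists>t\<in>{T + e j..T' - e j}. c \<le> X t \<omega>" using t(3) by blast
  next
    assume "\<exists>j. \<exists>t\<in>{T + e j..T' - e j}. c \<le> X t \<omega>"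
    then obtain j t where "t \<in> {T + e j..T' - e j}" "c \<le> X t \<omega>" by blast
    moreover have "0 < e j" by (rule e)
    ultimately show "\<exists>t\<in>{T<..<T'}. c \<le> X t \<omega>" by force
  qed
  then have "(\<exists>t\<in>{T<..<T'}. c \<le> X t \<omega>) \<longleftrightarrow> (\<exists>j. \<omega> \<notin> A j)" if "\<omega> \<in> space M" for \<omega>
    using that by (simp add: A_def not_less)
  then have "{\<omega>\<in>space M. (\<forall>t\<in>{0..T}. X t \<omega> < c) \<and> (\<exists>t\<in>{T<..<T'}. c \<le> X t \<omega>)}
      = {\<omega>\<in>space M. \<forall>t\<in>{0..T}. X t \<omega> < c} \<inter> (\<Union>j. space M - A j)"
    by blast
  also have "\<dots> \<in> sets M"
    using A brownian_motion_sets_less_on_Icc[OF BM order_refl \<open>0 < T\<close>] by auto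
  finally show ?thesis .
qed

lemma brownian_motion_prob_grid_below_increment:
  assumes BM: "brownian_motion M X" and "0 < T" "T < T2"
  shows "(measure M {\<omega>\<in>space M. -b < X T \<omega> \<and> X T \<omega> < a} - measure M {\<omega>\<in>space M. a < X T \<omega>})
      * measure M {\<omega>\<in>space M. c < X T2 \<omega> - X T \<omega>}
    \<le> measure M {\<omega>\<in>space M. ((\<forall>j\<le>2 ^ m. X (T * real j / 2 ^ m) \<omega> < a) \<and> -b < X T \<omega>)
                             \<and> c < X T2 \<omega> - X T \<omega>}"
proof -
  interpret prob_space M using brownian_motion_prob_space[OF BM] .
  define N :: nat where "N = 2 ^ m"
  define tt where "tt j = T * real j / 2 ^ m" for j
  have tt: "strict_mono tt" "tt 0 = 0" "tt N = T"
    using \<open>0 < T\<close> by (auto simp: strict_mono_def tt_def N_def divide_strict_right_mono)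
  define ts where "ts i = (if i \<le> N then tt i else T2)" for i
  have ts_inc: "ts i < ts (Suc i)" if "i \<le> N" for i
    using that strict_monoD[OF tt(1)] tt(3) \<open>T < T2\<close> by (cases "i = N") (auto simp: ts_def)
  have ts0: "ts 0 = 0" using tt(2) by (simp add: ts_def)
  let ?Q = "\<lambda>x. (\<forall>j\<le>N. x j < a) \<and> -b < x N"
  have Q: "Measurable.pred (PiM {..N} (\<lambda>_. borel)) ?Q" by measurable
  have "measure M {\<omega>\<in>space M. -b < X T \<omega> \<and> X T \<omega> < a} - measure M {\<omega>\<in>space M. a < X T \<omega>}
      \<le> measure M {\<omega>\<in>space M. ?Q (\<lambda>j\<in>{..N}. X (ts j) \<omega>)}"
    using brownian_motion_prob_grid_below[OF BM tt(1,2), of b N a] by (simp add: tt(3) ts_def)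
  moreover have "0 \<le> measure M {\<omega>\<in>space M. c < X T2 \<omega> - X T \<omega>}" by simp
  ultimately have "(measure M {\<omega>\<in>space M. -b < X T \<omega> \<and> X T \<omega> < a} - measure M {\<omega>\<in>space M. a < X T \<omega>})
      * measure M {\<omega>\<in>space M. c < X T2 \<omega> - X T \<omega>}
    \<le> measure M {\<omega>\<in>space M. ?Q (\<lambda>j\<in>{..N}. X (ts j) \<omega>)} * measure M {\<omega>\<in>space M. c < X T2 \<omega> - X T \<omega>}"
    by (rule mult_right_mono)
  also have "\<dots> = measure M {\<omega>\<in>space M. ?Q (\<lambda>j\<in>{..N}. X (ts j) \<omega>) \<and> X T2 \<omega> - X T \<omega> \<in> {c<..}}"
    using brownian_motion_indep_past_increment[OF BM ts0 ts_inc Q, of "{c<..}"] tt(2,3)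
    by (simp add: ts_def)
  also have "\<dots> = measure M {\<omega>\<in>space M. ((\<forall>j\<le>2 ^ m. X (T * real j / 2 ^ m) \<omega> < a) \<and> -b < X T \<omega>)
                             \<and> c < X T2 \<omega> - X T \<omega>}"
    using tt(3) by (intro arg_cong[where f = "measure M"]) (auto simp: ts_def tt_def N_def)
  finally show ?thesis .
qed

lemma brownian_motion_below_then_reaches_lower_bound:
  assumes BM: "brownian_motion M X" and "0 < T" "T < T2" "T2 < T'" "a < c"
  shows "(measure M {\<omega>\<in>space M. -b < X T \<omega> \<and> X T \<omega> < a} - measure M {\<omega>\<in>space M. a < X T \<omega>})
      * measure M {\<omega>\<in>space M. c + b < X T2 \<omega> - X T \<omega>}
    \<le> measure M {\<omega>\<in>space M. (\<forall>t\<in>{0..T}. X t \<omega> < c) \<and> (\<exists>t\<in>{T<..<T'}. c \<le> X t \<omega>)}"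
    (is "?p * ?q \<le> measure M ?E")
proof -
  interpret prob_space M using brownian_motion_prob_space[OF BM] .
  have [measurable]: "X T \<in> borel_measurable M" "X T2 \<in> borel_measurable M"
    "\<And>j m. X (T * real j / 2 ^ m) \<in> borel_measurable M"
    using \<open>0 < T\<close> \<open>T < T2\<close> by (auto intro!: brownian_motion_measurable[OF BM])
  define G where "G m = {\<omega>\<in>space M. ((\<forall>j\<le>2 ^ m. X (T * real j / 2 ^ m) \<omega> < a) \<and> -b < X T \<omega>)
                             \<and> c + b < X T2 \<omega> - X T \<omega>}" for m
  have G_sets: "range G \<subseteq> sets M" unfolding G_def by auto
  have "G (Suc m) \<subseteq> G m" for m
  proof
    fix \<omega> assume \<omega>: "\<omega> \<in> G (Suc m)"
    have "X (T * real j / 2 ^ m) \<omega> < a" if "j \<le> 2 ^ m" for j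
      using \<omega> that by (auto simp: G_def dest!: spec[of _ "2 * j"])
    then show "\<omega> \<in> G m" using \<omega> by (simp add: G_def)
  qed
  then have "(\<lambda>m. prob (G m)) \<longlonglongrightarrow> prob (\<Inter>m. G m)"
    using G_sets by (intro finite_Lim_measure_decseq) (auto simp: decseq_Suc_iff)
  moreover have "?p * ?q \<le> prob (G m)" for m
    unfolding G_def by (rule brownian_motion_prob_grid_below_increment[OF BM \<open>0 < T\<close> \<open>T < T2\<close>])
  ultimately have "?p * ?q \<le> prob (\<Inter>m. G m)"
    by (intro LIMSEQ_le_const) auto
  also have "\<dots> \<le> measure M ?E"
  proof (rule finite_measure_mono)
    show "(\<Inter>m. G m) \<subseteq> ?E"
    proof
      fix \<omega> assume "\<omega> \<in> (\<Inter>m. G m)"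
      then have \<omega>: "\<omega> \<in> space M" "-b < X T \<omega>" "c + b < X T2 \<omega> - X T \<omega>"
        and grid: "\<And>m j. j \<le> 2 ^ m \<Longrightarrow> X (T * real j / 2 ^ m) \<omega> < a"
        by (auto simp: G_def)
      have "continuous_on {0..T} (\<lambda>t. X t \<omega>)"
        using brownian_motion_continuous[OF BM \<omega>(1)] by (rule continuous_on_subset) auto
      then have "X t \<omega> \<le> a" if "t \<in> {0..T}" for t
        using continuous_le_if_le_on_dyadic_grid[OF _ \<open>0 < T\<close> _ that] grid less_imp_le by blast
      then have "\<forall>t\<in>{0..T}. X t \<omega> < c" using \<open>a < c\<close> by fastforce
      moreover have "T2 \<in> {T<..<T'}" "c \<le> X T2 \<omega>" using \<omega> \<open>T < T2\<close> \<open>T2 < T'\<close> by auto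
      ultimately show "\<omega> \<in> ?E" using \<omega>(1) by blast
    qed
  qed (rule brownian_motion_sets_below_then_reaches[OF BM \<open>0 < T\<close>]; use assms in linarith)
  finally show ?thesis .
qed

lemma brownian_motion_below_then_reaches_pos:
  assumes BM: "brownian_motion M X" and "0 < c" "0 < T" "T < T'"
  shows "0 < measure M {\<omega>\<in>space M. (\<forall>t\<in>{0..T}. X t \<omega> < c) \<and> (\<exists>t\<in>{T<..<T'}. c \<le> X t \<omega>)}"
proof -
  interpret prob_space M using brownian_motion_prob_space[OF BM] .
  define a where "a = c / 2"
  define T2 where "T2 = (T + T') / 2"
  have "0 < a" "a < c" "T < T2" "T2 < T'" using assms by (auto simp: a_def T2_def)
  have [measurable]: "X T \<in> borel_measurable M" "X T2 \<in> borel_measurable M"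
    using \<open>0 < T\<close> \<open>T < T2\<close> by (auto intro!: brownian_motion_measurable[OF BM])
  obtain b where "a \<le> b" and tail: "prob {\<omega>\<in>space M. a < X T \<omega>} < prob {\<omega>\<in>space M. -b < X T \<omega> \<and> X T \<omega> < a}"
    using prob_normal_tail_less_interval[OF brownian_motion_normal[OF BM \<open>0 < T\<close>] _ \<open>0 < a\<close>] \<open>0 < T\<close> by auto
  have "0 < prob {\<omega>\<in>space M. c + b < X T2 \<omega> - X T \<omega> \<and> X T2 \<omega> - X T \<omega> < c + b + 1}"
    using \<open>0 < T\<close> \<open>T < T2\<close>
    by (intro prob_normal_interval_pos[OF brownian_motion_increment_normal[OF BM]]) auto
  also have "\<dots> \<le> prob {\<omega>\<in>space M. c + b < X T2 \<omega> - X T \<omega>}"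
    by (intro finite_measure_mono) auto
  finally have "0 < (prob {\<omega>\<in>space M. -b < X T \<omega> \<and> X T \<omega> < a} - prob {\<omega>\<in>space M. a < X T \<omega>})
      * prob {\<omega>\<in>space M. c + b < X T2 \<omega> - X T \<omega>}"
    using tail by simp
  also have "\<dots> \<le> measure M {\<omega>\<in>space M. (\<forall>t\<in>{0..T}. X t \<omega> < c) \<and> (\<exists>t\<in>{T<..<T'}. c \<le> X t \<omega>)}"
    by (rule brownian_motion_below_then_reaches_lower_bound[OF BM \<open>0 < T\<close> \<open>T < T2\<close> \<open>T2 < T'\<close> \<open>a < c\<close>])
  finally show ?thesis .
qed

theorem theorem5p6:
  fixes M :: "'a measure" and X :: "real \<Rightarrow> 'a \<Rightarrow> real"
    and p \<phi>1 \<phi>2 \<phi>3 \<psi> :: mtl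
  assumes BM: "brownian_motion M X"
    and p_def: "p = Atom {1..}"
    and phi1_def: "\<phi>1 = Box {1<..<2} (Conj (Dia {1<..<4} p) (Neg (Dia {1<..<3} p)))"
    and phi2_def: "\<phi>2 = Conj (Dia {1<..<3} \<phi>1)
                      (Conj (Neg (Dia {1<..<2} \<phi>1)) (Neg (Dia {2<..<3} \<phi>1)))"
    and phi3_def: "\<phi>3 = Dia {1<..<2} \<phi>2"
    and psi_def: "\<psi> = Conj (Neg p) (Conj (Neg (Dia {0<..<8} p)) \<phi>3)"
  shows "\<not> ((\<lambda>n. measure M {\<omega> \<in> space M. dsat n (\<lambda>t. X t \<omega>) 0 \<psi>})
            \<longlonglongrightarrow> measure M {\<omega> \<in> space M. csat (\<lambda>t. X t \<omega>) 0 \<psi>})"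
proof -
  have \<psi>: "\<psi> = psi (Atom {1..})"
    unfolding psi_def phi3_def phi2_def phi1_def p_def ..
  have "measure M {\<omega> \<in> space M. dsat n (\<lambda>t. X t \<omega>) 0 \<psi>} = 0" if "2 \<le> n" for n
  proof -
    have "\<not> dsat n (\<lambda>t. X t \<omega>) 0 \<psi>" if "\<omega> \<in> space M" for \<omega>
      unfolding \<psi> by (rule not_dsat_psi[OF \<open>2 \<le> n\<close>]) (simp add: brownian_motion_zero[OF BM that])
    then have "{\<omega> \<in> space M. dsat n (\<lambda>t. X t \<omega>) 0 \<psi>} = {}" by blast
    then show ?thesis by (simp only: measure_empty)
  qed
  then have "(\<lambda>n. measure M {\<omega> \<in> space M. dsat n (\<lambda>t. X t \<omega>) 0 \<psi>}) \<longlonglongrightarrow> 0"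
    by (intro tendsto_eventually eventually_sequentiallyI)
  moreover have "measure M {\<omega> \<in> space M. csat (\<lambda>t. X t \<omega>) 0 \<psi>} =
      measure M {\<omega> \<in> space M. (\<forall>t\<in>{0..8}. X t \<omega> < 1) \<and> (\<exists>t\<in>{8<..<9}. 1 \<le> X t \<omega>)}"
    unfolding \<psi>
    by (intro arg_cong[where f = "measure M"] Collect_cong conj_cong refl,
        subst csat_psi_iff[OF brownian_motion_continuous[OF BM] closed_atLeast]) (auto simp: not_le)
  moreover have "0 < measure M {\<omega> \<in> space M. (\<forall>t\<in>{0..8}. X t \<omega> < 1) \<and> (\<exists>t\<in>{8<..<9}. 1 \<le> X t \<omega>)}"
    by (rule brownian_motion_below_then_reaches_pos[OF BM]) simp_all
  ultimately show ?thesis using LIMSEQ_unique by fastforce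
qed

end
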